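(* Let $n\in\mathbb{N}$, $0<\beta\le n$ and $b\in\operatorname{BMO}^\beta(\mathbb{R}^n)$. Then there exists $C_\beta>0$ such that \[ |b_{2^kQ}-b_Q|\le C_\beta\,k\,\|b\|_{\operatorname{BMO}^\beta(\mathbb{R}^n)} \] for each cube $Q$ and each $k\in\mathbb{N}$.
   Context: $\mathcal{H}^\beta_\infty(E)=\inf\{\sum_i\omega_\beta r_i^\beta:E\subset\bigcup_iB(x_i,r_i)\}$, $\omega_\beta=\pi^{\beta/2}/\Gamma(\beta/2+1)$; integrals against $\mathcal{H}^\beta_\infty$ are Choquet integrals $\int_\Omega g\,d\mathcal{H}^\beta_\infty=\int_0^\infty\mathcal{H}^\beta_\infty(\{x\in\Omega:g>t\})\,dt$. Cubes are axis-parallel, $\ell(Q)$ is the side length, and $2^kQ$ is the cube with the same center as $Q$ and side length $2^k\ell(Q)$. $\|b\|_{\operatorname{BMO}^\beta(\mathbb{R}^n)}=\sup_Q\inf_{c\in\mathbb{R}}\ell(Q)^{-\beta}\int_Q|b-c|\,d\mathcal{H}^\beta_\infty$. For a cube $Q$, $b_Q$ denotes a constant $c\in\mathbb{R}$ at which $\ell(Q)^{-\beta}\int_Q|b-c|\,d\mathcal{H}^\beta_\infty$ attains its minimum over $c\in\mathbb{R}$ (such a minimizer exists for $b\in\operatorname{BMO}^\beta(\mathbb{R}^n)$). *)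

theory Defs
  imports "HOL-Analysis.Analysis"
begin

definition omega :: "real \<Rightarrow> real" where
  "omega \<beta> = pi powr (\<beta> / 2) / Gamma (\<beta> / 2 + 1)"

text \<open>Hausdorff content of dimension beta in R^n (countable covers by Euclidean balls;
  radius-0 balls are empty, so finite covers are included).\<close>
definition hcontent :: "real \<Rightarrow> (real ^ 'n) set \<Rightarrow> ennreal" where
  "hcontent \<beta> E = (INF (x, r) \<in> {(x :: nat \<Rightarrow> real ^ 'n, r :: nat \<Rightarrow> real).
        (\<forall>i. r i \<ge> 0) \<and> E \<subseteq> (\<Union>i. ball (x i) (r i))}.
      (\<Sum>i. ennreal (omega \<beta> * r i powr \<beta>)))"

definition choquet :: "real \<Rightarrow> (real ^ 'n) set \<Rightarrow> (real ^ 'n \<Rightarrow> real) \<Rightarrow> ennreal" where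
  "choquet \<beta> \<Omega> g = (\<integral>\<^sup>+ t. indicator {0..} t * hcontent \<beta> {x \<in> \<Omega>. g x > t} \<partial>lborel)"

definition cube :: "real ^ 'n \<Rightarrow> real \<Rightarrow> (real ^ 'n) set" where
  "cube x l = {y. \<forall>i. \<bar>y $ i - x $ i\<bar> \<le> l / 2}"

definition osc :: "real \<Rightarrow> (real ^ 'n \<Rightarrow> real) \<Rightarrow> real ^ 'n \<Rightarrow> real \<Rightarrow> real \<Rightarrow> ennreal" where
  "osc \<beta> b x l c = ennreal (l powr (- \<beta>)) * choquet \<beta> (cube x l) (\<lambda>y. \<bar>b y - c\<bar>)"

definition bmo_norm :: "real \<Rightarrow> (real ^ 'n \<Rightarrow> real) \<Rightarrow> ennreal" where
  "bmo_norm \<beta> b = (SUP (x, l) \<in> {(x, l). l > 0}. INF c. osc \<beta> b x l c)"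

definition BMO :: "real \<Rightarrow> (real ^ 'n \<Rightarrow> real) set" where
  "BMO \<beta> = {b. bmo_norm \<beta> b < \<infinity>}"

end

theory Submission
  imports Defs
begin

text \<open>The Hausdorff content of a cube Q of side l is at least a constant times l^beta: a cover
  of Q by balls either contains a ball of radius at least l, or consists of balls with
  r^n \<le> l^(n - beta) r^beta, so that its cost dominates the Lebesgue measure of Q. Consequently,
  if Q is covered by two sets, their contents add up to at least c l^beta. For t < |c - c'|/2
  the superlevel sets of |b - c| and |b - c'| at height t cover Q, so the Choquet integrals of
  |b - b_Q| over Q and of |b - b_2Q| over 2Q force |b_Q - b_2Q| \<le> C ||b||. Telescoping along
  Q, 2Q, ..., 2^k Q gives the factor k.\<close>

lemma omega_pos: "\<beta> > 0 \<Longrightarrow> omega \<beta> > 0"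
  unfolding omega_def by (intro divide_pos_pos) auto

lemma cube_eq_cbox: "cube x l = cbox (x - vec (l/2)) (x + vec (l/2))"
proof -
  have "\<And>y i. (\<bar>y$i - x$i\<bar> \<le> l/2) = (x$i - l/2 \<le> y$i \<and> y$i \<le> x$i + l/2)"
    by arith
  then show ?thesis unfolding cube_def by (simp add: mem_box_cart set_eq_iff)
qed

lemma emeasure_cube:
  assumes "l \<ge> 0"
  shows "emeasure lborel (cube (x::real^'n) l) = ennreal (l ^ CARD('n))"
proof -
  have vec_inner: "b \<in> Basis \<Longrightarrow> (vec c :: real^'n) \<bullet> b = c" for b c
    by (auto simp: Basis_vec_def inner_axis)
  have "(x + vec (l/2)) - (x - vec (l/2)) = (vec l :: real^'n)"
    by (simp add: vec_eq_iff)
  then show ?thesis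
    unfolding cube_eq_cbox emeasure_lborel_cbox_eq using assms
    by (auto simp: inner_diff_left inner_add_left vec_inner)
qed

lemma ball_subset_cube: "ball (y::real^'n) r \<subseteq> cube y (2*r)"
  unfolding cube_def
proof safe
  fix z i assume "z \<in> ball y r"
  then have "norm (z - y) < r" by (simp add: dist_norm norm_minus_commute)
  moreover have "\<bar>(z - y) $ i\<bar> \<le> norm (z - y)" by (rule component_le_norm_cart)
  ultimately show "\<bar>z $ i - y $ i\<bar> \<le> 2 * r / 2" by simp
qed

lemma cube_mono: "l \<le> l' \<Longrightarrow> cube x l \<subseteq> cube x l'"
  unfolding cube_def by auto (metis order_trans)

lemma powr_diff_mult_power_le:
  fixes r l \<beta> :: real
  assumes "0 \<le> r" "r \<le> l" "\<beta> \<le> real n" "n > 0"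
  shows "l powr (\<beta> - real n) * r ^ n \<le> r powr \<beta>"
proof (cases "r = 0")
  case False
  then have r: "r > 0" using assms by simp
  have "l powr (\<beta> - real n) \<le> r powr (\<beta> - real n)"
    using r assms by (intro powr_mono2') auto
  then have "l powr (\<beta> - real n) * r ^ n \<le> r powr (\<beta> - real n) * r powr real n"
    using r by (simp add: powr_realpow mult_right_mono)
  also have "\<dots> = r powr \<beta>" by (simp add: powr_add[symmetric])
  finally show ?thesis .
qed (use assms in \<open>simp add: zero_power\<close>)

lemma hcontent_mono: "A \<subseteq> B \<Longrightarrow> hcontent \<beta> A \<le> hcontent \<beta> B"
  unfolding hcontent_def by (rule INF_superset_mono) auto

lemma choquet_mono_domain: "A \<subseteq> B \<Longrightarrow> choquet \<beta> A g \<le> choquet \<beta> B g"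
  unfolding choquet_def
  by (intro nn_integral_mono mult_left_mono hcontent_mono) auto

lemma emeasure_ball_le:
  fixes y :: "real^'n"
  assumes "\<beta> \<le> real CARD('n)" "0 \<le> r" "r \<le> l"
  shows "ennreal (l powr (\<beta> - real CARD('n)) / 2 ^ CARD('n)) * emeasure lborel (ball y r)
     \<le> ennreal (r powr \<beta>)"
proof -
  let ?c = "l powr (\<beta> - real CARD('n)) / 2 ^ CARD('n)"
  have "emeasure lborel (ball y r) \<le> emeasure lborel (cube y (2*r))"
    by (intro emeasure_mono ball_subset_cube) (simp add: cube_eq_cbox)
  also have "\<dots> = ennreal ((2*r) ^ CARD('n))"
    using assms by (simp add: emeasure_cube)
  finally have "ennreal ?c * emeasure lborel (ball y r) \<le> ennreal ?c * ennreal ((2*r) ^ CARD('n))"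
    by (rule mult_left_mono) simp
  also have "\<dots> = ennreal (?c * (2*r) ^ CARD('n))"
    by (rule ennreal_mult[symmetric]) (use assms in auto)
  also have "?c * (2*r) ^ CARD('n) = l powr (\<beta> - real CARD('n)) * r ^ CARD('n)"
    by (simp add: power_mult_distrib)
  also have "\<dots> \<le> r powr \<beta>"
    using assms by (intro powr_diff_mult_power_le) auto
  finally show ?thesis by (simp add: ennreal_leI order_trans)
qed

lemma ball_cover_sum_lower:
  fixes y :: "nat \<Rightarrow> real^'n"
  assumes "0 < \<beta>" "\<beta> \<le> real CARD('n)" "0 < l" "\<And>i. 0 \<le> r i"
  shows "min (ennreal (omega \<beta> * l powr \<beta>))
           (ennreal (omega \<beta> * l powr (\<beta> - real CARD('n)) / 2 ^ CARD('n))
              * emeasure lborel (\<Union>i. ball (y i) (r i)))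
         \<le> (\<Sum>i. ennreal (omega \<beta> * r i powr \<beta>))"
proof (cases "\<exists>i. l \<le> r i")
  case True
  then obtain i where "l \<le> r i" by blast
  then have "ennreal (omega \<beta> * l powr \<beta>) \<le> ennreal (omega \<beta> * r i powr \<beta>)"
    using assms omega_pos[of \<beta>] by (intro ennreal_leI mult_left_mono powr_mono2) auto
  also have "\<dots> \<le> (\<Sum>i. ennreal (omega \<beta> * r i powr \<beta>))"
    using sum_le_suminf[of "\<lambda>i. ennreal (omega \<beta> * r i powr \<beta>)" "{i}"] by simp
  finally show ?thesis by (simp add: min.coboundedI1)
next
  case False
  let ?c = "ennreal (omega \<beta>) * ennreal (l powr (\<beta> - real CARD('n)) / 2 ^ CARD('n))"
  have "?c * emeasure lborel (\<Union>i. ball (y i) (r i))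
      \<le> ?c * (\<Sum>i. emeasure lborel (ball (y i) (r i)))"
    by (intro mult_left_mono emeasure_subadditive_countably) auto
  also have "\<dots> = (\<Sum>i. ennreal (omega \<beta>)
      * (ennreal (l powr (\<beta> - real CARD('n)) / 2 ^ CARD('n)) * emeasure lborel (ball (y i) (r i))))"
    by (simp add: mult.assoc)
  also have "\<dots> \<le> (\<Sum>i. ennreal (omega \<beta>) * ennreal (r i powr \<beta>))"
    using False assms by (intro suminf_le mult_left_mono emeasure_ball_le) (auto simp: not_le less_imp_le)
  finally have bound: "?c * emeasure lborel (\<Union>i. ball (y i) (r i))
      \<le> (\<Sum>i. ennreal (omega \<beta> * r i powr \<beta>))"
    using omega_pos[OF assms(1)] by (simp add: ennreal_mult)
  have "ennreal (omega \<beta> * (l powr (\<beta> - real CARD('n)) / 2 ^ CARD('n))) = ?c"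
    by (rule ennreal_mult') (use omega_pos[OF assms(1)] in simp)
  then have "ennreal (omega \<beta> * l powr (\<beta> - real CARD('n)) / 2 ^ CARD('n)) = ?c"
    by simp
  then show ?thesis using bound by (simp add: min.coboundedI2)
qed

lemma INF_ennreal_add_const_nonempty:
  fixes f :: "'a \<Rightarrow> ennreal"
  assumes "S \<noteq> {}"
  shows "(INF i\<in>S. f i + c) = (INF i\<in>S. f i) + c"
  using continuous_at_Inf_mono[of "\<lambda>x. x + c" "f`S"] assms
  using continuous_add[of "at_right (Inf (f`S))", of "\<lambda>x. x" "\<lambda>x. c"]
  by (auto simp: mono_def image_comp)

lemma le_INF_add_INF_ennreal:
  fixes f g :: "'a \<Rightarrow> ennreal"
  assumes "\<And>a b. a \<in> S \<Longrightarrow> b \<in> T \<Longrightarrow> K \<le> f a + g b"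
  shows "K \<le> (INF a\<in>S. f a) + (INF b\<in>T. g b)"
proof (cases "S = {} \<or> T = {}")
  case False
  have "K \<le> (INF a\<in>S. f a + (INF b\<in>T. g b))"
  proof (rule INF_greatest)
    fix a assume "a \<in> S"
    then have "K \<le> (INF b\<in>T. f a + g b)" using assms by (auto intro: INF_greatest)
    also have "\<dots> = f a + (INF b\<in>T. g b)"
      using INF_ennreal_add_const_nonempty[of T g "f a"] False by (simp add: add.commute)
    finally show "K \<le> f a + (INF b\<in>T. g b)" .
  qed
  also have "\<dots> = (INF a\<in>S. f a) + (INF b\<in>T. g b)"
    using INF_ennreal_add_const_nonempty[of S f] False by simp
  finally show ?thesis .
qed auto

lemma min_add_le_ennreal: "min a (x + y) \<le> min a x + min (a::ennreal) y"
  by (simp add: min_def add_increasing add_increasing2)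

text \<open>Bounding each cover separately by ball_cover_sum_lower and using subadditivity of min
  avoids interleaving the two covers into a single one.\<close>
lemma hcontent_union_cube_lower:
  fixes x :: "real^'n"
  assumes "0 < \<beta>" "\<beta> \<le> real CARD('n)" "0 < l" "cube x l \<subseteq> A \<union> B"
  shows "ennreal (omega \<beta> / 2 ^ CARD('n) * l powr \<beta>) \<le> hcontent \<beta> A + hcontent \<beta> B"
proof -
  let ?c = "ennreal (omega \<beta> * l powr (\<beta> - real CARD('n)) / 2 ^ CARD('n))"
  let ?m = "\<lambda>U. min (ennreal (omega \<beta> * l powr \<beta>)) (?c * emeasure lborel U)"
  have \<omega>: "omega \<beta> > 0" using omega_pos assms(1) by simp
  have "omega \<beta> / 2 ^ CARD('n) * l powr \<beta> \<le> omega \<beta> * l powr \<beta>"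
    using \<omega> by (intro mult_right_mono) (auto simp: divide_le_eq)
  moreover have "?c * emeasure lborel (cube x l) = ennreal (omega \<beta> / 2 ^ CARD('n) * l powr \<beta>)"
  proof -
    have powr: "l powr (\<beta> - real CARD('n)) * l ^ CARD('n) = l powr \<beta>"
      using assms(3) by (simp add: powr_realpow[symmetric] powr_add[symmetric])
    have "?c * emeasure lborel (cube x l)
        = ennreal (omega \<beta> * l powr (\<beta> - real CARD('n)) / 2 ^ CARD('n) * l ^ CARD('n))"
      using assms(3) \<omega> by (simp add: emeasure_cube ennreal_mult[symmetric])
    also have "\<dots> = ennreal (omega \<beta> / 2 ^ CARD('n) * l powr \<beta>)"
      by (rule arg_cong[where f = ennreal]) (simp add: powr[symmetric] ac_simps)
    finally show ?thesis .
  qed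
  ultimately have lower: "ennreal (omega \<beta> / 2 ^ CARD('n) * l powr \<beta>) \<le> ?m (cube x l)"
    by (simp add: ennreal_leI)
  show ?thesis
    unfolding hcontent_def
  proof (rule le_INF_add_INF_ennreal, clarsimp)
    fix ya ra yb rb
    assume ra: "\<forall>i. 0 \<le> ra (i::nat)" and A: "A \<subseteq> (\<Union>i. ball ((ya::nat\<Rightarrow>real^'n) i) (ra i))"
      and rb: "\<forall>i. 0 \<le> rb (i::nat)" and B: "B \<subseteq> (\<Union>i. ball ((yb::nat\<Rightarrow>real^'n) i) (rb i))"
    let ?UA = "\<Union>i. ball (ya i) (ra i)" and ?UB = "\<Union>i. ball (yb i) (rb i)"
    have "emeasure lborel (cube x l) \<le> emeasure lborel ?UA + emeasure lborel ?UB"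
      using assms(4) A B
      by (intro order.trans[OF emeasure_mono emeasure_subadditive]) (auto simp: cube_eq_cbox)
    then have "?m (cube x l) \<le> min (ennreal (omega \<beta> * l powr \<beta>))
        (?c * emeasure lborel ?UA + ?c * emeasure lborel ?UB)"
      unfolding distrib_left[symmetric] by (intro min.mono mult_left_mono) auto
    also have "\<dots> \<le> ?m ?UA + ?m ?UB"
      by (rule min_add_le_ennreal)
    also have "\<dots> \<le> (\<Sum>i. ennreal (omega \<beta> * ra i powr \<beta>)) + (\<Sum>i. ennreal (omega \<beta> * rb i powr \<beta>))"
      using assms ra rb by (intro add_mono ball_cover_sum_lower) auto
    finally have "ennreal (omega \<beta> / 2 ^ CARD('n) * l powr \<beta>)
        \<le> (\<Sum>i. ennreal (omega \<beta> * ra i powr \<beta>)) + (\<Sum>i. ennreal (omega \<beta> * rb i powr \<beta>))"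
      by (rule order.trans[OF lower])
    then show "ennreal (omega \<beta> * l powr \<beta> / 2 ^ CARD('n))
        \<le> (\<Sum>i. ennreal (omega \<beta> * ra i powr \<beta>)) + (\<Sum>i. ennreal (omega \<beta> * rb i powr \<beta>))"
      by simp
  qed
qed

lemma borel_measurable_antimono_ennreal:
  fixes f :: "real \<Rightarrow> ennreal"
  assumes "\<And>s t. s \<le> t \<Longrightarrow> f t \<le> f s"
  shows "f \<in> borel_measurable borel"
proof (rule borel_measurableI_greater)
  fix y
  have "is_interval {x. y < f x}"
    unfolding is_interval_1 using assms by (auto intro: less_le_trans)
  then show "{x \<in> space borel. y < f x} \<in> sets borel"
    using real_interval_borel_measurable by simp
qed

lemma choquet_integrand_measurable:
  "(\<lambda>t::real. indicator {0..} t * hcontent \<beta> {x \<in> \<Omega>. g x > t}) \<in> borel_measurable lborel"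
proof -
  have "(\<lambda>t::real. hcontent \<beta> {x \<in> \<Omega>. g x > t}) \<in> borel_measurable borel"
    by (rule borel_measurable_antimono_ennreal) (intro hcontent_mono, auto)
  then show ?thesis by measurable
qed

lemma choquet_two_constants_lower:
  fixes x :: "real^'n" and b :: "real^'n \<Rightarrow> real"
  assumes "0 < \<beta>" "\<beta> \<le> real CARD('n)" "0 < l"
  shows "ennreal (\<bar>c - c'\<bar> / 2) * ennreal (omega \<beta> / 2 ^ CARD('n) * l powr \<beta>)
    \<le> choquet \<beta> (cube x l) (\<lambda>y. \<bar>b y - c\<bar>) + choquet \<beta> (cube x l) (\<lambda>y. \<bar>b y - c'\<bar>)"
proof -
  let ?K = "ennreal (omega \<beta> / 2 ^ CARD('n) * l powr \<beta>)"
  let ?d = "\<bar>c - c'\<bar> / 2"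
  let ?F = "\<lambda>c t. hcontent \<beta> {y \<in> cube x l. \<bar>b y - c\<bar> > t}"
  have "ennreal ?d * ?K = ?K * emeasure lborel {0..<?d}" by (simp add: mult.commute)
  also have "\<dots> = (\<integral>\<^sup>+ t. ?K * indicator {0..<?d} t \<partial>lborel)"
    by (rule nn_integral_cmult_indicator[symmetric]) simp
  also have "\<dots> \<le> (\<integral>\<^sup>+ t. indicator {0..} t * ?F c t + indicator {0..} t * ?F c' t \<partial>lborel)"
  proof (rule nn_integral_mono)
    fix t :: real
    show "?K * indicator {0..<?d} t \<le> indicator {0..} t * ?F c t + indicator {0..} t * ?F c' t"
    proof (cases "0 \<le> t \<and> t < ?d")
      case True
      then have "cube x l \<subseteq> {y \<in> cube x l. \<bar>b y - c\<bar> > t} \<union> {y \<in> cube x l. \<bar>b y - c'\<bar> > t}"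
        by auto
      then have "?K \<le> ?F c t + ?F c' t"
        by (rule hcontent_union_cube_lower[OF assms])
      then show ?thesis using True by simp
    qed auto
  qed
  also have "\<dots> = choquet \<beta> (cube x l) (\<lambda>y. \<bar>b y - c\<bar>) + choquet \<beta> (cube x l) (\<lambda>y. \<bar>b y - c'\<bar>)"
    unfolding choquet_def by (rule nn_integral_add) (rule choquet_integrand_measurable)+
  finally show ?thesis .
qed

lemma choquet_cube_eq_osc:
  assumes "0 < l"
  shows "choquet \<beta> (cube x l) (\<lambda>y. \<bar>b y - c\<bar>) = ennreal (l powr \<beta>) * osc \<beta> b x l c"
proof -
  have "ennreal (l powr \<beta>) * ennreal (l powr (- \<beta>)) = 1"
    using assms by (simp add: ennreal_mult[symmetric] powr_add[symmetric])
  then show ?thesis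
    unfolding osc_def by (simp add: mult.assoc[symmetric])
qed

lemma osc_INF_le_bmo_norm: "0 < l \<Longrightarrow> (INF c. osc \<beta> b x l c) \<le> bmo_norm \<beta> b"
  unfolding bmo_norm_def by (rule SUP_upper2[of "(x, l)"]) auto

lemma abs_diff_le_osc_doubling:
  fixes b :: "real^'n \<Rightarrow> real"
  assumes "0 < \<beta>" "\<beta> \<le> real CARD('n)" "0 < l" "0 \<le> N"
    and "osc \<beta> b x l c \<le> ennreal N" and "osc \<beta> b x (2 * l) c' \<le> ennreal N"
  shows "\<bar>c - c'\<bar> \<le> 2 * (1 + 2 powr \<beta>) * 2 ^ CARD('n) / omega \<beta> * N"
proof -
  define K where "K = omega \<beta> / 2 ^ CARD('n)"
  have K: "0 < K" unfolding K_def using omega_pos[OF assms(1)] by simp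
  have "choquet \<beta> (cube x l) (\<lambda>y. \<bar>b y - c\<bar>) \<le> ennreal (l powr \<beta>) * ennreal N"
    using assms(3,5) by (simp add: choquet_cube_eq_osc mult_left_mono)
  moreover have "choquet \<beta> (cube x l) (\<lambda>y. \<bar>b y - c'\<bar>) \<le> ennreal ((2 * l) powr \<beta>) * ennreal N"
  proof -
    have "choquet \<beta> (cube x l) (\<lambda>y. \<bar>b y - c'\<bar>) \<le> choquet \<beta> (cube x (2 * l)) (\<lambda>y. \<bar>b y - c'\<bar>)"
      using assms(3) by (intro choquet_mono_domain cube_mono) simp
    also have "\<dots> \<le> ennreal ((2 * l) powr \<beta>) * ennreal N"
      using assms(3,6) by (simp add: choquet_cube_eq_osc mult_left_mono)
    finally show ?thesis .
  qed
  ultimately have "ennreal (\<bar>c - c'\<bar> / 2) * ennreal (K * l powr \<beta>)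
      \<le> ennreal (l powr \<beta>) * ennreal N + ennreal ((2 * l) powr \<beta>) * ennreal N"
    using choquet_two_constants_lower[OF assms(1-3), of c c' x b] unfolding K_def
    by (meson add_mono order_trans)
  then have "ennreal (\<bar>c - c'\<bar> / 2 * (K * l powr \<beta>)) \<le> ennreal ((l powr \<beta> + (2 * l) powr \<beta>) * N)"
    using K assms(4)
    by (simp add: ennreal_mult[symmetric] distrib_right ennreal_plus[symmetric] del: ennreal_plus)
  then have "\<bar>c - c'\<bar> / 2 * (K * l powr \<beta>) \<le> (l powr \<beta> + (2 * l) powr \<beta>) * N"
    using assms(4) by (subst (asm) ennreal_le_iff) auto
  also have "(2 * l) powr \<beta> = 2 powr \<beta> * l powr \<beta>"
    using assms(3) by (simp add: powr_mult)
  finally have "(\<bar>c - c'\<bar> * K / 2) * l powr \<beta> \<le> ((1 + 2 powr \<beta>) * N) * l powr \<beta>"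
    by (simp add: algebra_simps)
  then have "\<bar>c - c'\<bar> * K / 2 \<le> (1 + 2 powr \<beta>) * N"
    using assms(3) by simp
  then show ?thesis
    using K unfolding K_def by (simp add: field_simps)
qed

lemma abs_diff_doubling_iterate:
  fixes f :: "real \<Rightarrow> real"
  assumes "\<And>l. 0 < l \<Longrightarrow> \<bar>f (2 * l) - f l\<bar> \<le> D" and "0 < l"
  shows "\<bar>f (2 ^ k * l) - f l\<bar> \<le> real k * D"
proof (induction k)
  case (Suc k)
  have "\<bar>f (2 ^ Suc k * l) - f l\<bar> \<le> \<bar>f (2 * (2 ^ k * l)) - f (2 ^ k * l)\<bar> + \<bar>f (2 ^ k * l) - f l\<bar>"
    by (simp add: mult.assoc)
  also have "\<dots> \<le> D + real k * D"
    using assms Suc.IH by (intro add_mono) auto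
  finally show ?case by (simp add: algebra_simps)
qed simp

theorem lemma2p7:
  fixes \<beta> :: real and b :: "real ^ 'n \<Rightarrow> real"
    and bQ :: "real ^ 'n \<Rightarrow> real \<Rightarrow> real"
  assumes "0 < \<beta>" and "\<beta> \<le> real CARD('n)"
    and "b \<in> BMO \<beta>"
    and "\<And>x l c. l > 0 \<Longrightarrow> osc \<beta> b x l (bQ x l) \<le> osc \<beta> b x l c"
  shows "\<exists>C > 0. \<forall>x l (k::nat). l > 0 \<longrightarrow>
           ennreal \<bar>bQ x (2 ^ k * l) - bQ x l\<bar> \<le> ennreal (C * real k) * bmo_norm \<beta> b"
proof -
  obtain N where N: "bmo_norm \<beta> b = ennreal N" "0 \<le> N"
    using assms(3) unfolding BMO_def by (cases "bmo_norm \<beta> b") auto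
  define C where "C = 2 * (1 + 2 powr \<beta>) * 2 ^ CARD('n) / omega \<beta>"
  have "C > 0"
    unfolding C_def using omega_pos[OF assms(1)] by (simp add: add_pos_pos)
  have osc_bQ: "osc \<beta> b x l (bQ x l) \<le> ennreal N" if "0 < l" for x l
    using that assms(4) osc_INF_le_bmo_norm[of l \<beta> b x] N(1) by (metis INF_greatest order_trans)
  have "\<bar>bQ x (2 ^ k * l) - bQ x l\<bar> \<le> real k * (C * N)" if "0 < l" for x l k
  proof (rule abs_diff_doubling_iterate[OF _ that])
    fix l :: real assume l: "0 < l"
    then have "0 < 2 * l" by simp
    with l show "\<bar>bQ x (2 * l) - bQ x l\<bar> \<le> C * N"
      unfolding C_def using abs_diff_le_osc_doubling[OF assms(1,2) l N(2) osc_bQ osc_bQ]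
      by (simp add: abs_minus_commute)
  qed
  then show ?thesis
    using \<open>C > 0\<close> N by (intro exI[of _ C]) (auto simp: ennreal_mult[symmetric] ennreal_leI ac_simps)
qed

end
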